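(* Let $E\subset\mathbb{R}^2$ be $\mathcal H^1$ measurable with $\mathcal H^1(E)<\infty$, let $\alpha>0$, $r_0>0$, and let $F\subset E$ be a set with $d(F)<r_0/3$ such that (i) $\mathcal H^1(E\cap U(x,r))>(\tfrac34+\alpha)\,2r$ for all $x\in F$ and $0<r<r_0$, and (ii) $\mathcal H^1(E\cap B)\le(1+\alpha)\,d(B)$ for every set $B\subset\mathbb{R}^2$ with $F\cap B\neq\emptyset$ and $d(B)<r_0$. Then for all $x,y\in F$ with $x\neq y$, $$\mathcal H^1\big(E\cap U(x,y)\big)>\alpha|x-y|,$$ where $U(x,y)=U(x,|x-y|)\cap U(y,|x-y|)$.
   Context: $\mathcal H^1$ is the one-dimensional Hausdorff measure on $\mathbb{R}^2$, normalized so that $\mathcal H^1(A)=\lim_{\delta\to0}\inf\{\sum_i d(E_i): A\subset\bigcup_i E_i,\ d(E_i)<\delta\}$. $d(A)$ denotes the diameter of $A$; $U(z,r)$ is the open disc of centre $z$ and radius $r$. *)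

theory Defs
  imports "HOL-Analysis.Analysis"
begin

definition hcontent1 :: "real \<Rightarrow> (real^2) set \<Rightarrow> ennreal" where
  "hcontent1 \<delta> A = (INF C \<in> {C :: nat \<Rightarrow> (real^2) set.
       A \<subseteq> (\<Union>i. C i) \<and> (\<forall>i. bounded (C i) \<and> diameter (C i) < \<delta>)}.
       (\<Sum>i. ennreal (diameter (C i))))"

text \<open>One-dimensional Hausdorff (outer) measure: the limit as delta tends to 0,
  which equals the supremum since the content is antitone in delta.\<close>
definition H1 :: "(real^2) set \<Rightarrow> ennreal" where
  "H1 A = (SUP \<delta> \<in> {0<..}. hcontent1 \<delta> A)"

definition H1_measurable :: "(real^2) set \<Rightarrow> bool" where
  "H1_measurable E \<longleftrightarrow> (\<forall>A. H1 A = H1 (A \<inter> E) + H1 (A - E))"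

end

theory Submission imports Defs begin

text \<open>Write \<open>d = |x - y|\<close> and \<open>k = 2(3/4 + \<alpha>)\<close>. Take a slightly shrunken disc \<open>U(x, d - \<eta>)\<close>
  and the part \<open>U(y,d) - U(x,d)\<close> of the other disc: they are \<open>\<eta>\<close>-separated, so \<open>H1\<close> is additive on
  them even without measurability, and both lie in \<open>U(x,d) \<union> U(y,d)\<close>, a set of diameter \<open>3d < r\<^sub>0\<close>
  meeting \<open>F\<close>. Hence by (ii) their measures add up to at most \<open>3d(1 + \<alpha>)\<close>, while by (i) the first has
  measure nearly \<open>kd\<close> and the second at least \<open>kd\<close> minus the measure of the lens \<open>U(x,y)\<close>.
  Since \<open>2kd = 3d(1 + \<alpha>) + \<alpha>d\<close>, the lens carries more than \<open>\<alpha>d\<close>.\<close>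

lemma hcontent1_mono: "A \<subseteq> B \<Longrightarrow> hcontent1 \<delta> A \<le> hcontent1 \<delta> B"
  unfolding hcontent1_def by (rule INF_superset_mono) auto

lemma hcontent1_antimono: "\<delta>1 \<le> \<delta>2 \<Longrightarrow> hcontent1 \<delta>2 A \<le> hcontent1 \<delta>1 A"
  unfolding hcontent1_def by (rule INF_superset_mono) (auto intro: less_le_trans)

lemma H1_mono: "A \<subseteq> B \<Longrightarrow> H1 A \<le> H1 B"
  unfolding H1_def by (rule SUP_mono) (use hcontent1_mono in blast)

lemma hcontent1_near_optimal_cover:
  assumes "hcontent1 \<delta> A < top" and "0 < e"
  obtains C where "A \<subseteq> (\<Union>i. C i)" and "\<And>i. bounded (C i) \<and> diameter (C i) < \<delta>"
    and "(\<Sum>i. ennreal (diameter (C i))) < hcontent1 \<delta> A + ennreal e"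
proof -
  have "hcontent1 \<delta> A < hcontent1 \<delta> A + ennreal e"
    using assms by (cases "hcontent1 \<delta> A")
      (auto simp: ennreal_plus[symmetric] intro!: ennreal_lessI simp del: ennreal_plus)
  then show ?thesis
    using that unfolding hcontent1_def INF_less_iff by blast
qed

lemma suminf_ennreal_interleave:
  fixes C D :: "nat \<Rightarrow> ennreal"
  shows "(\<Sum>n. if even n then C (n div 2) else D (n div 2)) = (\<Sum>n. C n) + (\<Sum>n. D n)"
proof -
  let ?K = "\<lambda>n. if even n then C (n div 2) else D (n div 2)"
  have "?K sums (\<Sum>n. ?K n)"
    by (simp add: summable_sums summableI)
  from sums_group[OF this, of 2]
  have "(\<lambda>n. sum ?K {n*2..<n*2+2}) sums (\<Sum>n. ?K n)"
    by simp
  moreover have "sum ?K {n*2..<n*2+2} = C n + D n" for n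
  proof -
    have "{n*2..<n*2+2} = {2*n, 2*n+1}" by auto
    moreover have "(2*n+1) div 2 = n" by presburger
    ultimately show ?thesis by simp
  qed
  ultimately have "(\<Sum>n. ?K n) = (\<Sum>n. C n + D n)"
    by (simp add: sums_iff)
  also have "\<dots> = (\<Sum>n. C n) + (\<Sum>n. D n)"
    by (rule suminf_add[symmetric]) (auto intro: summableI)
  finally show ?thesis .
qed

lemma hcontent1_subadditive: "hcontent1 \<delta> (A \<union> B) \<le> hcontent1 \<delta> A + hcontent1 \<delta> B"
proof (rule ennreal_le_epsilon)
  fix e :: real
  assume fin: "hcontent1 \<delta> A + hcontent1 \<delta> B < top" and "0 < e"
  have "0 < e/2" "hcontent1 \<delta> A < top" "hcontent1 \<delta> B < top"
    using \<open>0 < e\<close> fin by auto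
  obtain C where C: "A \<subseteq> (\<Union>i. C i)" "\<And>i. bounded (C i) \<and> diameter (C i) < \<delta>"
    and sum_C: "(\<Sum>i. ennreal (diameter (C i))) < hcontent1 \<delta> A + ennreal (e/2)"
    by (rule hcontent1_near_optimal_cover[OF \<open>hcontent1 \<delta> A < top\<close> \<open>0 < e/2\<close>]) blast
  obtain D where D: "B \<subseteq> (\<Union>i. D i)" "\<And>i. bounded (D i) \<and> diameter (D i) < \<delta>"
    and sum_D: "(\<Sum>i. ennreal (diameter (D i))) < hcontent1 \<delta> B + ennreal (e/2)"
    by (rule hcontent1_near_optimal_cover[OF \<open>hcontent1 \<delta> B < top\<close> \<open>0 < e/2\<close>]) blast
  define K where "K n = (if even n then C (n div 2) else D (n div 2))" for n
  have "(\<Union>i. C i) \<union> (\<Union>i. D i) \<subseteq> (\<Union>i. K i)"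
  proof (intro Un_least UN_least)
    fix i :: nat
    have "(2*i+1) div 2 = i" by presburger
    then have "C i = K (2*i)" "D i = K (2*i+1)"
      by (simp_all add: K_def)
    then show "C i \<subseteq> (\<Union>i. K i)" "D i \<subseteq> (\<Union>i. K i)"
      by (metis UNIV_I UN_upper)+
  qed
  then have "A \<union> B \<subseteq> (\<Union>i. K i)"
    using C(1) D(1) by (meson Un_mono order_trans)
  moreover have "\<forall>i. bounded (K i) \<and> diameter (K i) < \<delta>"
    using C(2) D(2) by (simp add: K_def)
  ultimately have "hcontent1 \<delta> (A \<union> B) \<le> (\<Sum>i. ennreal (diameter (K i)))"
    unfolding hcontent1_def by (intro INF_lower) blast
  also have "\<dots> = (\<Sum>i. ennreal (diameter (C i))) + (\<Sum>i. ennreal (diameter (D i)))"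
    using suminf_ennreal_interleave[of "\<lambda>i. ennreal (diameter (C i))" "\<lambda>i. ennreal (diameter (D i))"]
    unfolding K_def by (simp add: if_distrib)
  also have "\<dots> \<le> (hcontent1 \<delta> A + ennreal (e/2)) + (hcontent1 \<delta> B + ennreal (e/2))"
    using sum_C sum_D by (intro add_mono) auto
  also have "\<dots> = hcontent1 \<delta> A + hcontent1 \<delta> B + ennreal e"
    using \<open>0 < e\<close> by (simp add: ennreal_plus[symmetric] add_ac del: ennreal_plus)
  finally show "hcontent1 \<delta> (A \<union> B) \<le> hcontent1 \<delta> A + hcontent1 \<delta> B + ennreal e" .
qed

lemma H1_subadditive: "H1 (A \<union> B) \<le> H1 A + H1 B"
  unfolding H1_def
proof (rule SUP_least)
  fix \<delta> :: real
  assume "\<delta> \<in> {0<..}"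
  then have "hcontent1 \<delta> A + hcontent1 \<delta> B \<le> (SUP \<delta>\<in>{0<..}. hcontent1 \<delta> A) + (SUP \<delta>\<in>{0<..}. hcontent1 \<delta> B)"
    by (intro add_mono SUP_upper)
  then show "hcontent1 \<delta> (A \<union> B) \<le> (SUP \<delta>\<in>{0<..}. hcontent1 \<delta> A) + (SUP \<delta>\<in>{0<..}. hcontent1 \<delta> B)"
    using hcontent1_subadditive order.trans by blast
qed

text \<open>A covering set of diameter less than the separation \<open>\<eta>\<close> meets at most one of \<open>A\<close> and \<open>B\<close>,
  so every fine cover of \<open>A \<union> B\<close> splits into a cover of \<open>A\<close> and a cover of \<open>B\<close>.\<close>
lemma hcontent1_Un_separated:
  assumes sep: "\<And>a b. a \<in> A \<Longrightarrow> b \<in> B \<Longrightarrow> \<eta> \<le> dist a b" and "0 < \<delta>" and "\<delta> \<le> \<eta>"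
  shows "hcontent1 \<delta> A + hcontent1 \<delta> B \<le> hcontent1 \<delta> (A \<union> B)"
  unfolding hcontent1_def[of _ "A \<union> B"]
proof (rule INF_greatest, clarify)
  fix C :: "nat \<Rightarrow> (real^2) set"
  assume cover: "A \<union> B \<subseteq> (\<Union>i. C i)" and fine: "\<forall>i. bounded (C i) \<and> diameter (C i) < \<delta>"
  define CA where "CA i = (if C i \<inter> B = {} then C i else {})" for i
  define CB where "CB i = (if C i \<inter> B = {} then {} else C i)" for i
  have "C i \<inter> B = {}" if "a \<in> A" "a \<in> C i" for a i
  proof (rule ccontr)
    assume "C i \<inter> B \<noteq> {}"
    then obtain b where "b \<in> C i" "b \<in> B" by blast
    then have "dist a b \<le> diameter (C i)"
      using fine that diameter_bounded_bound by blast
    moreover have "\<eta> \<le> dist a b"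
      using sep that \<open>b \<in> B\<close> by blast
    ultimately show False
      using fine \<open>\<delta> \<le> \<eta>\<close> by (meson leD less_le_trans order.trans)
  qed
  then have "A \<subseteq> (\<Union>i. CA i)"
    using cover by (fastforce simp: CA_def)
  moreover have "\<forall>i. bounded (CA i) \<and> diameter (CA i) < \<delta>"
    using fine \<open>0 < \<delta>\<close> by (simp add: CA_def)
  ultimately have le_A: "hcontent1 \<delta> A \<le> (\<Sum>i. ennreal (diameter (CA i)))"
    unfolding hcontent1_def by (intro INF_lower) blast
  have "B \<subseteq> (\<Union>i. CB i)"
    using cover by (force simp: CB_def)
  moreover have "\<forall>i. bounded (CB i) \<and> diameter (CB i) < \<delta>"
    using fine \<open>0 < \<delta>\<close> by (simp add: CB_def)
  ultimately have le_B: "hcontent1 \<delta> B \<le> (\<Sum>i. ennreal (diameter (CB i)))"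
    unfolding hcontent1_def by (intro INF_lower) blast
  have "(\<Sum>i. ennreal (diameter (CA i))) + (\<Sum>i. ennreal (diameter (CB i)))
        = (\<Sum>i. ennreal (diameter (CA i)) + ennreal (diameter (CB i)))"
    by (rule suminf_add) (auto intro: summableI)
  also have "\<dots> = (\<Sum>i. ennreal (diameter (C i)))"
    by (rule suminf_cong) (simp add: CA_def CB_def)
  finally show "hcontent1 \<delta> A + hcontent1 \<delta> B \<le> (\<Sum>i. ennreal (diameter (C i)))"
    using le_A le_B by (metis add_mono)
qed

lemma H1_Un_separated:
  assumes sep: "\<And>a b. a \<in> A \<Longrightarrow> b \<in> B \<Longrightarrow> \<eta> \<le> dist a b" and "0 < \<eta>"
  shows "H1 A + H1 B \<le> H1 (A \<union> B)"
proof -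
  have bound: "hcontent1 \<delta>1 A + hcontent1 \<delta>2 B \<le> H1 (A \<union> B)" if "0 < \<delta>1" "0 < \<delta>2" for \<delta>1 \<delta>2
  proof -
    define \<delta> where "\<delta> = min \<eta> (min \<delta>1 \<delta>2)"
    have "hcontent1 \<delta>1 A + hcontent1 \<delta>2 B \<le> hcontent1 \<delta> A + hcontent1 \<delta> B"
      by (intro add_mono hcontent1_antimono) (simp_all add: \<delta>_def)
    also have "\<dots> \<le> hcontent1 \<delta> (A \<union> B)"
      by (rule hcontent1_Un_separated[OF sep]) (use that \<open>0 < \<eta>\<close> in \<open>simp_all add: \<delta>_def\<close>)
    also have "\<dots> \<le> H1 (A \<union> B)"
      unfolding H1_def using that \<open>0 < \<eta>\<close> by (intro SUP_upper) (simp add: \<delta>_def)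
    finally show ?thesis .
  qed
  have "H1 A + H1 B = (SUP \<delta>1\<in>{0<..}. hcontent1 \<delta>1 A + H1 B)"
    unfolding H1_def[of A] by (rule ennreal_SUP_add_left[symmetric]) auto
  also have "\<dots> \<le> H1 (A \<union> B)"
  proof (rule SUP_least)
    fix \<delta>1 :: real
    assume "\<delta>1 \<in> {0<..}"
    have "hcontent1 \<delta>1 A + H1 B = (SUP \<delta>2\<in>{0<..}. hcontent1 \<delta>2 B + hcontent1 \<delta>1 A)"
      unfolding H1_def[of B] by (subst ennreal_SUP_add_left) (auto simp: add_ac)
    also have "\<dots> \<le> H1 (A \<union> B)"
      using bound \<open>\<delta>1 \<in> {0<..}\<close> by (intro SUP_least) (metis add.commute greaterThan_iff)
    finally show "hcontent1 \<delta>1 A + H1 B \<le> H1 (A \<union> B)" .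
  qed
  finally show ?thesis .
qed

lemma diameter_Un_balls_le:
  fixes x y :: "'a::real_normed_vector"
  assumes "0 \<le> r"
  shows "diameter (ball x r \<union> ball y r) \<le> 2 * r + dist x y"
proof (rule diameter_le)
  fix p q
  assume "p \<in> ball x r \<union> ball y r" "q \<in> ball x r \<union> ball y r"
  then have "dist p q \<le> 2 * r + dist x y"
    by (auto simp: dist_commute) (smt (verit) dist_commute dist_triangle)+
  then show "norm (p - q) \<le> 2 * r + dist x y"
    by (simp add: dist_norm)
qed (use assms in simp)

lemma H1_Un_ball_outside:
  fixes x :: "real^2"
  assumes "A \<subseteq> ball x r" and "B \<inter> ball x (r + \<eta>) = {}" and "0 < \<eta>"
  shows "H1 A + H1 B \<le> H1 (A \<union> B)"
proof (rule H1_Un_separated[OF _ \<open>0 < \<eta>\<close>])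
  fix a b
  assume "a \<in> A" "b \<in> B"
  then have "dist x a < r" and "r + \<eta> \<le> dist x b"
    using assms(1,2) by auto
  then show "\<eta> \<le> dist a b"
    using dist_triangle[of x b a] by linarith
qed

text \<open>The core estimate, with \<open>k\<close> in place of \<open>2(3/4 + \<alpha>)\<close> and \<open>M\<close> in place of \<open>3d(1 + \<alpha>)\<close>.
  The strict lower bound at \<open>y\<close> leaves room \<open>k\<eta>\<close> to shrink the disc at \<open>x\<close> by \<open>\<eta>\<close>.\<close>
lemma H1_lens_lower_bound:
  fixes E :: "(real^2) set" and x y :: "real^2" and k M :: real
  defines "d \<equiv> dist x y"
  assumes "x \<noteq> y" and "0 < k"
    and lower_x: "\<And>r. 0 < r \<Longrightarrow> r < d \<Longrightarrow> ennreal (k * r) < H1 (E \<inter> ball x r)"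
    and lower_y: "ennreal (k * d) < H1 (E \<inter> ball y d)"
    and upper: "H1 (E \<inter> (ball x d \<union> ball y d)) \<le> ennreal M"
  shows "ennreal (2 * k * d) < ennreal M + H1 (E \<inter> (ball x d \<inter> ball y d))"
proof -
  have "0 < d"
    using \<open>x \<noteq> y\<close> by (simp add: d_def)
  obtain z where z: "ennreal (k * d) < z" "z < H1 (E \<inter> ball y d)"
    using dense[OF lower_y] by blast
  then obtain t where t: "z = ennreal t" "k * d < t"
    using \<open>0 < k\<close> \<open>0 < d\<close> by (cases z) (auto simp: ennreal_less_iff)
  define \<eta> where "\<eta> = min (d / 2) ((t - k * d) / k)"
  have "0 < \<eta>" "\<eta> < d" "k * \<eta> \<le> t - k * d"
    using \<open>0 < d\<close> \<open>0 < k\<close> t(2) by (auto simp: \<eta>_def min_def field_simps)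
  define S where "S = ball y d - ball x d"
  define L where "L = ball x d \<inter> ball y d"
  have "H1 (E \<inter> ball y d) \<le> H1 (E \<inter> S \<union> E \<inter> L)"
    by (rule H1_mono) (auto simp: S_def L_def)
  then have cover_y: "H1 (E \<inter> ball y d) \<le> H1 (E \<inter> S) + H1 (E \<inter> L)"
    using H1_subadditive order.trans by blast
  have "H1 (E \<inter> ball x (d - \<eta>)) + H1 (E \<inter> S) \<le> H1 (E \<inter> ball x (d - \<eta>) \<union> E \<inter> S)"
    by (rule H1_Un_ball_outside[of _ x "d - \<eta>" _ \<eta>]) (use \<open>0 < \<eta>\<close> in \<open>auto simp: S_def\<close>)
  also have "\<dots> \<le> H1 (E \<inter> (ball x d \<union> ball y d))"
    by (rule H1_mono) (use \<open>0 < \<eta>\<close> in \<open>auto simp: S_def\<close>)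
  also have "\<dots> \<le> ennreal M"
    by (rule upper)
  finally have separated_parts: "H1 (E \<inter> ball x (d - \<eta>)) + H1 (E \<inter> S) \<le> ennreal M" .
  have "ennreal (2 * k * d) = ennreal (k * (d - \<eta>)) + ennreal (k * d + k * \<eta>)"
    using \<open>0 < k\<close> \<open>0 < \<eta>\<close> \<open>\<eta> < d\<close>
    by (simp add: ennreal_plus[symmetric] algebra_simps del: ennreal_plus)
  also have "\<dots> < H1 (E \<inter> ball x (d - \<eta>)) + H1 (E \<inter> ball y d)"
  proof (rule add_strict_mono)
    show "ennreal (k * (d - \<eta>)) < H1 (E \<inter> ball x (d - \<eta>))"
      using lower_x \<open>0 < \<eta>\<close> \<open>\<eta> < d\<close> by simp
    have "ennreal (k * d + k * \<eta>) \<le> ennreal t"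
      using \<open>k * \<eta> \<le> t - k * d\<close> by (intro ennreal_leI) simp
    then show "ennreal (k * d + k * \<eta>) < H1 (E \<inter> ball y d)"
      using z t by simp
  qed
  also have "\<dots> \<le> H1 (E \<inter> ball x (d - \<eta>)) + (H1 (E \<inter> S) + H1 (E \<inter> L))"
    using cover_y by (rule add_left_mono)
  also have "\<dots> = (H1 (E \<inter> ball x (d - \<eta>)) + H1 (E \<inter> S)) + H1 (E \<inter> L)"
    by (rule add.assoc[symmetric])
  also have "\<dots> \<le> ennreal M + H1 (E \<inter> L)"
    using separated_parts by (rule add_right_mono)
  finally show ?thesis
    by (simp only: L_def)
qed

theorem mainTheorem2:
  fixes E F :: "(real^2) set" and \<alpha> r\<^sub>0 :: real
  assumes "H1_measurable E" and "H1 E < \<infinity>"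
    and "\<alpha> > 0" and "r\<^sub>0 > 0"
    and "F \<subseteq> E" and "bounded F" and "diameter F < r\<^sub>0 / 3"
    and "\<And>x r. x \<in> F \<Longrightarrow> 0 < r \<Longrightarrow> r < r\<^sub>0 \<Longrightarrow>
           H1 (E \<inter> ball x r) > ennreal ((3/4 + \<alpha>) * (2 * r))"
    and "\<And>B. F \<inter> B \<noteq> {} \<Longrightarrow> bounded B \<Longrightarrow> diameter B < r\<^sub>0 \<Longrightarrow>
           H1 (E \<inter> B) \<le> ennreal ((1 + \<alpha>) * diameter B)"
  shows "\<forall>x\<in>F. \<forall>y\<in>F. x \<noteq> y \<longrightarrow>
           H1 (E \<inter> (ball x (dist x y) \<inter> ball y (dist x y))) > ennreal (\<alpha> * dist x y)"
proof (intro ballI impI)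
  fix x y
  assume "x \<in> F" "y \<in> F" "x \<noteq> y"
  define d where "d = dist x y"
  define k where "k = (3/4 + \<alpha>) * 2"
  define M where "M = (1 + \<alpha>) * (3 * d)"
  have "0 < d" and "3 * d < r\<^sub>0"
    using \<open>x \<noteq> y\<close> diameter_bounded_bound[OF \<open>bounded F\<close> \<open>x \<in> F\<close> \<open>y \<in> F\<close>] \<open>diameter F < r\<^sub>0 / 3\<close>
    by (simp_all add: d_def)
  have lower: "ennreal (k * r) < H1 (E \<inter> ball z r)" if "z \<in> F" "0 < r" "r \<le> d" for z r
    using assms(8)[OF that(1,2)] that(3) \<open>3 * d < r\<^sub>0\<close> \<open>0 < d\<close>
    unfolding k_def by (simp only: mult.assoc)
  have "diameter (ball x d \<union> ball y d) \<le> 3 * d"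
    using diameter_Un_balls_le[of d x y] \<open>0 < d\<close> by (simp add: d_def)
  then have "H1 (E \<inter> (ball x d \<union> ball y d)) \<le> ennreal ((1 + \<alpha>) * diameter (ball x d \<union> ball y d))"
    using \<open>x \<in> F\<close> \<open>0 < d\<close> \<open>3 * d < r\<^sub>0\<close> by (intro assms(9)) auto
  also have "\<dots> \<le> ennreal M"
    using \<open>diameter (ball x d \<union> ball y d) \<le> 3 * d\<close> \<open>\<alpha> > 0\<close>
    by (simp add: M_def ennreal_leI)
  finally have "ennreal (2 * k * d) < ennreal M + H1 (E \<inter> (ball x d \<inter> ball y d))"
    using lower \<open>x \<in> F\<close> \<open>y \<in> F\<close> \<open>x \<noteq> y\<close> \<open>0 < d\<close> \<open>\<alpha> > 0\<close>
    by (intro H1_lens_lower_bound[of x y k E M, folded d_def]) (simp_all add: k_def)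
  moreover have "ennreal (2 * k * d) = ennreal M + ennreal (\<alpha> * d)"
    using \<open>0 < d\<close> \<open>\<alpha> > 0\<close>
    by (simp add: k_def M_def ennreal_plus[symmetric] algebra_simps del: ennreal_plus)
  ultimately show "ennreal (\<alpha> * dist x y) < H1 (E \<inter> (ball x (dist x y) \<inter> ball y (dist x y)))"
    by (simp add: ennreal_add_left_cancel_less d_def)
qed

end
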